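(* Let $\tilde\beta\in(0,1)$. Consider: (C3.1): there exist symmetric positive definite $Q^{(k)}\in\mathbb{R}^{\tilde n\times\tilde n}$, $k\in\{1,\dots,N\}$, and a symmetric positive semidefinite $Z\in\mathbb{R}^{n(n+m)\times n(n+m)}$ with $\mathrm{rank}(Z)=1$ and $S^{(k)}_{\rm lmi}(Q^{(k)},Z,\tilde\beta)\succeq0$ for all $k$; (C3.2): there exist symmetric positive definite $Q^{(k)}$ and symmetric positive semidefinite $Z$ with $\mathrm{rank}(Z)=1$ and $S^{(k)}_{\rm lmi}(Q^{(k)},Z,1)\succ0$ for all $k$; (C2.1): there exist symmetric positive definite $Q^{(k)}$, $H\in\mathbb{R}^{n\times n}$, $L\in\mathbb{R}^{m\times n}$ with $S^{(k)}_{\rm qmi}(Q^{(k)},H,L,\tilde\beta)\succeq0$ for all $k$; (C2.2): there exist symmetric positive definite $Q^{(k)}$, $H$, $L$ with $S^{(k)}_{\rm qmi}(Q^{(k)},H,L,1)\succ0$ for all $k$. Then (C3.1) is equivalent to (C2.1), and (C3.2) is equivalent to (C2.2), where $Z$ and $(H,L)$ correspond via $Z=\begin{bmatrix}\mathrm{vec}(H)\\ \mathrm{vec}(L)\end{bmatrix}\begin{bmatrix}\mathrm{vec}(H)\\ \mathrm{vec}(L)\end{bmatrix}^\top$.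
   Context: Let $n,m,N$ be positive integers, $\tilde n=n(n+1)/2$. $\mathrm{vec}$ stacks columns; $\mathrm{vech}(X)$ stacks columnwise the entries on and below the diagonal. $E_e\in\mathbb{R}^{\tilde n\times n^2}$ with $E_e\mathrm{vec}(X)=\mathrm{vech}(X)$ for all $X\in\mathbb{R}^{n\times n}$; $D\in\mathbb{R}^{n^2\times\tilde n}$ with $D\mathrm{vech}(Y)=\mathrm{vec}(Y)$ for symmetric $Y$; $\mathcal{C}(Y):=E_eYD$. Let $M^{(1)},\dots,M^{(N)}\in\mathbb{R}^{n(n+m)\times n(n+m)}$ be symmetric, with blocks $M^{(k)}_{i,j}\in\mathbb{R}^{n\times n}$ ($i,j\le n+m$). Column $n(j-1)+i$ of $F^{(k)}_{aa}\in\mathbb{R}^{n^2\times n^2}$ is $\mathrm{vec}(M^{(k)}_{i,j})$; column $m(j-1)+i'$ of $F^{(k)}_{ab}\in\mathbb{R}^{n^2\times nm}$ is $\mathrm{vec}(M^{(k)}_{n+i',j})$; column $n(j'-1)+i$ of $F^{(k)}_{ba}\in\mathbb{R}^{n^2\times nm}$ is $\mathrm{vec}(M^{(k)}_{i,n+j'})$; column $m(j'-1)+i'$ of $F^{(k)}_{bb}\in\mathbb{R}^{n^2\times m^2}$ is $\mathrm{vec}(M^{(k)}_{n+i',n+j'})$ ($i,j\le n$, $i',j'\le m$). QMI: $F^{(k)}_{\rm qmi}(L,H):=\mathcal{C}(F^{(k)}_{aa}(H\otimes H)-F^{(k)}_{ab}(H\otimes L)-F^{(k)}_{ba}(L\otimes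 H)+F^{(k)}_{bb}(L\otimes L))$, $S^{(k)}_{\rm qmi}(Q,H,L,\tilde\beta):=\begin{bmatrix}\tilde\beta^2Q & F^{(k)}_{\rm qmi}(L,H)^\top\\ F^{(k)}_{\rm qmi}(L,H) & \mathcal{C}(H\otimes H)+\mathcal{C}(H\otimes H)^\top-Q\end{bmatrix}$. LMI: for symmetric $Z\in\mathbb{R}^{n(n+m)\times n(n+m)}$, partition into $2n\times2n$ blocks $Z_{p,q}$, with block rows/columns $1..n$ of size $n$ and $n+1..2n$ of size $m$. Define $F_{hh}(Z)\in\mathbb{R}^{n^2\times n^2}$, $F_{hl}(Z),F_{lh}(Z)\in\mathbb{R}^{mn\times n^2}$, $F_{ll}(Z)\in\mathbb{R}^{m^2\times n^2}$ by: for $i,j\le n$, column $n(j-1)+i$ equals $\mathrm{vec}(Z_{i,j})$, $\mathrm{vec}(Z_{n+i,j})$, $\mathrm{vec}(Z_{i,n+j})$, $\mathrm{vec}(Z_{n+i,n+j})$ respectively. $F^{(k)}_{\rm lmi}(Z):=\mathcal{C}(F^{(k)}_{aa}F_{hh}(Z)-F^{(k)}_{ab}F_{hl}(Z)-F^{(k)}_{ba}F_{lh}(Z)+F^{(k)}_{bb}F_{ll}(Z))$ and $S^{(k)}_{\rm lmi}(Q,Z,\tilde\beta):=\begin{bmatrix}\tilde\beta^2Q & F^{(k)}_{\rm lmi}(Z)^\top\\ F^{(k)}_{\rm lmi}(Z) & \mathcal{C}(F_{hh}(Z))+\mathcal{C}(F_{hh}(Z))^\top-Q\end{bmatrix}$.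 *)

theory Defs
  imports "Jordan_Normal_Form.Matrix" "Jordan_Normal_Form.DL_Rank"
begin

text \<open>All indices below are 0-based; the paper's 1-based index n(j-1)+i becomes n*j+i.\<close>

definition tri :: "nat \<Rightarrow> nat" where "tri n = n * (n + 1) div 2"

definition vecm :: "real mat \<Rightarrow> real vec" where
  "vecm X = vec (dim_row X * dim_col X) (\<lambda>k. X $$ (k mod dim_row X, k div dim_row X))"

text \<open>Position of entry (i,j), i \<ge> j, of an n x n matrix inside vech (column-wise lower triangle).\<close>
definition vech_idx :: "nat \<Rightarrow> nat \<Rightarrow> nat \<Rightarrow> nat" where
  "vech_idx n i j = (\<Sum>c<j. n - c) + (i - j)"

definition vech :: "nat \<Rightarrow> real mat \<Rightarrow> real vec" where
  "vech n X = vec (tri n) (\<lambda>p. X $$ (THE ij. fst ij < n \<and> snd ij \<le> fst ij \<and> vech_idx n (fst ij) (snd ij) = p))"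

text \<open>Elimination matrix E_e (E_e vec X = vech X) and duplication matrix D (D vech Y = vec Y, Y symmetric).\<close>
definition Ee :: "nat \<Rightarrow> real mat" where
  "Ee n = mat (tri n) (n * n)
     (\<lambda>(p, q). if q div n \<le> q mod n \<and> p = vech_idx n (q mod n) (q div n) then 1 else 0)"

definition Dup :: "nat \<Rightarrow> real mat" where
  "Dup n = mat (n * n) (tri n)
     (\<lambda>(q, p). if p = vech_idx n (max (q mod n) (q div n)) (min (q mod n) (q div n)) then 1 else 0)"

definition Cop :: "nat \<Rightarrow> real mat \<Rightarrow> real mat" where
  "Cop n Y = Ee n * Y * Dup n"

definition kron :: "real mat \<Rightarrow> real mat \<Rightarrow> real mat" where
  "kron A B = mat (dim_row A * dim_row B) (dim_col A * dim_col B)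
     (\<lambda>(i, j). A $$ (i div dim_row B, j div dim_col B) * B $$ (i mod dim_row B, j mod dim_col B))"

definition sym_mat :: "real mat \<Rightarrow> bool" where
  "sym_mat A \<longleftrightarrow> square_mat A \<and> transpose_mat A = A"

definition psd :: "real mat \<Rightarrow> bool" where
  "psd A \<longleftrightarrow> sym_mat A \<and> (\<forall>x \<in> carrier_vec (dim_row A). scalar_prod x (A *\<^sub>v x) \<ge> 0)"

definition pd :: "real mat \<Rightarrow> bool" where
  "pd A \<longleftrightarrow> sym_mat A \<and>
     (\<forall>x \<in> carrier_vec (dim_row A). x \<noteq> 0\<^sub>v (dim_row A) \<longrightarrow> scalar_prod x (A *\<^sub>v x) > 0)"

definition mat_rank :: "real mat \<Rightarrow> nat" where
  "mat_rank A = vec_space.rank (dim_row A) A"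

definition Mblk :: "nat \<Rightarrow> real mat \<Rightarrow> nat \<Rightarrow> nat \<Rightarrow> real mat" where
  "Mblk n M i j = mat n n (\<lambda>(a, b). M $$ (n * i + a, n * j + b))"

definition Faa :: "nat \<Rightarrow> nat \<Rightarrow> real mat \<Rightarrow> real mat" where
  "Faa n m M = mat (n * n) (n * n) (\<lambda>(r, c). vecm (Mblk n M (c mod n) (c div n)) $ r)"
definition Fab :: "nat \<Rightarrow> nat \<Rightarrow> real mat \<Rightarrow> real mat" where
  "Fab n m M = mat (n * n) (n * m) (\<lambda>(r, c). vecm (Mblk n M (n + c mod m) (c div m)) $ r)"
definition Fba :: "nat \<Rightarrow> nat \<Rightarrow> real mat \<Rightarrow> real mat" where
  "Fba n m M = mat (n * n) (n * m) (\<lambda>(r, c). vecm (Mblk n M (c mod n) (n + c div n)) $ r)"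
definition Fbb :: "nat \<Rightarrow> nat \<Rightarrow> real mat \<Rightarrow> real mat" where
  "Fbb n m M = mat (n * n) (m * m) (\<lambda>(r, c). vecm (Mblk n M (n + c mod m) (n + c div m)) $ r)"

definition zoff :: "nat \<Rightarrow> nat \<Rightarrow> nat \<Rightarrow> nat" where
  "zoff n m p = (if p < n then n * p else n * n + m * (p - n))"
definition zsz :: "nat \<Rightarrow> nat \<Rightarrow> nat \<Rightarrow> nat" where
  "zsz n m p = (if p < n then n else m)"
definition Zblk :: "nat \<Rightarrow> nat \<Rightarrow> real mat \<Rightarrow> nat \<Rightarrow> nat \<Rightarrow> real mat" where
  "Zblk n m Z p q = mat (zsz n m p) (zsz n m q) (\<lambda>(a, b). Z $$ (zoff n m p + a, zoff n m q + b))"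

definition Fhh :: "nat \<Rightarrow> nat \<Rightarrow> real mat \<Rightarrow> real mat" where
  "Fhh n m Z = mat (n * n) (n * n) (\<lambda>(r, c). vecm (Zblk n m Z (c mod n) (c div n)) $ r)"
definition Fhl :: "nat \<Rightarrow> nat \<Rightarrow> real mat \<Rightarrow> real mat" where
  "Fhl n m Z = mat (m * n) (n * n) (\<lambda>(r, c). vecm (Zblk n m Z (n + c mod n) (c div n)) $ r)"
definition Flh :: "nat \<Rightarrow> nat \<Rightarrow> real mat \<Rightarrow> real mat" where
  "Flh n m Z = mat (m * n) (n * n) (\<lambda>(r, c). vecm (Zblk n m Z (c mod n) (n + c div n)) $ r)"
definition Fll :: "nat \<Rightarrow> nat \<Rightarrow> real mat \<Rightarrow> real mat" where
  "Fll n m Z = mat (m * m) (n * n) (\<lambda>(r, c). vecm (Zblk n m Z (n + c mod n) (n + c div n)) $ r)"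

definition F_qmi :: "nat \<Rightarrow> nat \<Rightarrow> real mat \<Rightarrow> real mat \<Rightarrow> real mat \<Rightarrow> real mat" where
  "F_qmi n m M L H = Cop n (Faa n m M * kron H H - Fab n m M * kron H L
      - Fba n m M * kron L H + Fbb n m M * kron L L)"

definition S_qmi :: "nat \<Rightarrow> nat \<Rightarrow> real mat \<Rightarrow> real mat \<Rightarrow> real mat \<Rightarrow> real mat \<Rightarrow> real \<Rightarrow> real mat" where
  "S_qmi n m M Q H L \<beta> = four_block_mat ((\<beta>^2) \<cdot>\<^sub>m Q) (transpose_mat (F_qmi n m M L H))
      (F_qmi n m M L H) (Cop n (kron H H) + transpose_mat (Cop n (kron H H)) - Q)"

definition F_lmi :: "nat \<Rightarrow> nat \<Rightarrow> real mat \<Rightarrow> real mat \<Rightarrow> real mat" where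
  "F_lmi n m M Z = Cop n (Faa n m M * Fhh n m Z - Fab n m M * Fhl n m Z
      - Fba n m M * Flh n m Z + Fbb n m M * Fll n m Z)"

definition S_lmi :: "nat \<Rightarrow> nat \<Rightarrow> real mat \<Rightarrow> real mat \<Rightarrow> real mat \<Rightarrow> real \<Rightarrow> real mat" where
  "S_lmi n m M Q Z \<beta> = four_block_mat ((\<beta>^2) \<cdot>\<^sub>m Q) (transpose_mat (F_lmi n m M Z))
      (F_lmi n m M Z) (Cop n (Fhh n m Z) + transpose_mat (Cop n (Fhh n m Z)) - Q)"

definition Zof :: "real mat \<Rightarrow> real mat \<Rightarrow> real mat" where
  "Zof H L = (let v = vecm H @\<^sub>v vecm L in mat (dim_vec v) (dim_vec v) (\<lambda>(i, j). v $ i * v $ j))"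

end

theory Submission
  imports Defs
begin

(* A positive semidefinite matrix of rank one is an outer product v v^T, and cutting v into
   two pieces writes it as Zof H L; conversely Zof H L is always positive semidefinite.
   Each block of Zof H L is the outer product of two columns of H or L, so Fhh, Fhl, Flh and
   Fll applied to Zof H L are the Kronecker products kron H H, kron H L, kron L H and kron L L,
   and S_lmi at Zof H L is literally S_qmi at (H, L). Finally Zof H L has rank exactly one
   because H is nonzero: for H = 0 the lower right block of S_qmi is -Q, which is negative
   definite. *)

lemma quadratic_form_unit_vec:
  fixes A :: "'a :: semiring_1 mat"
  assumes A: "A \<in> carrier_mat n n" and i: "i < n"
  shows "unit_vec n i \<bullet> (A *\<^sub>v unit_vec n i) = A $$ (i, i)"
proof -
  have "unit_vec n i \<bullet> (A *\<^sub>v unit_vec n i) = (A *\<^sub>v unit_vec n i) $ i"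
    using A i scalar_prod_left_unit[of "A *\<^sub>v unit_vec n i" n i] by simp
  also have "\<dots> = A $$ (i, i)"
    using A i by simp
  finally show ?thesis .
qed

lemma psd_diag_nonneg:
  assumes A: "psd A" and i: "i < dim_row A"
  shows "A $$ (i, i) \<ge> 0"
proof -
  have sq: "A \<in> carrier_mat (dim_row A) (dim_row A)"
    using A by (intro carrier_matI) (simp_all add: psd_def sym_mat_def)
  have "\<forall>x \<in> carrier_vec (dim_row A). x \<bullet> (A *\<^sub>v x) \<ge> 0"
    using A by (simp add: psd_def)
  from bspec[OF this unit_vec_carrier]
  have "unit_vec (dim_row A) i \<bullet> (A *\<^sub>v unit_vec (dim_row A) i) \<ge> 0" .
  then show ?thesis
    using quadratic_form_unit_vec[OF sq i] by simp
qed

lemma pd_diag_pos: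
  assumes A: "pd A" and i: "i < dim_row A"
  shows "A $$ (i, i) > 0"
proof -
  have sq: "A \<in> carrier_mat (dim_row A) (dim_row A)"
    using A by (intro carrier_matI) (simp_all add: pd_def sym_mat_def)
  have "\<forall>x \<in> carrier_vec (dim_row A). x \<noteq> 0\<^sub>v (dim_row A) \<longrightarrow> x \<bullet> (A *\<^sub>v x) > 0"
    using A by (simp add: pd_def)
  from mp[OF bspec[OF this unit_vec_carrier] unit_vec_nonzero[OF i]]
  have "unit_vec (dim_row A) i \<bullet> (A *\<^sub>v unit_vec (dim_row A) i) > 0" .
  then show ?thesis
    using quadratic_form_unit_vec[OF sq i] by simp
qed

lemma pd_imp_psd:
  assumes "pd A"
  shows "psd A"
  unfolding psd_def
proof (intro conjI ballI)
  show "sym_mat A"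
    using assms unfolding pd_def by auto
  fix x :: "real vec"
  assume x: "x \<in> carrier_vec (dim_row A)"
  show "0 \<le> x \<bullet> (A *\<^sub>v x)"
  proof (cases "x = 0\<^sub>v (dim_row A)")
    case True
    have "A *\<^sub>v x \<in> carrier_vec (dim_row A)"
      unfolding carrier_vec_def by simp
    then show ?thesis
      using True by simp
  next
    case False
    then show ?thesis
      using assms x unfolding pd_def by force
  qed
qed

context vec_space
begin

lemma lin_indpt_singleton:
  assumes u: "u \<in> carrier_vec n" "u \<noteq> 0\<^sub>v n"
  shows "lin_indpt {u}"
proof
  assume "lin_dep {u}"
  moreover have "cols (mat_of_cols n [u]) = [u]"
    using u by simp
  moreover have "mat_of_cols n [u] \<in> carrier_mat n 1"
    by (simp add: mat_of_cols_def)
  ultimately obtain v where v: "v \<in> carrier_vec 1" "v \<noteq> 0\<^sub>v 1" "mat_of_cols n [u] *\<^sub>v v = 0\<^sub>v n"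
    using lin_depE[of "mat_of_cols n [u]" 1] by auto
  have v0: "v $ 0 \<noteq> 0"
    using v(1,2) by (auto simp: vec_eq_iff)
  have "u = 0\<^sub>v n"
  proof (rule eq_vecI)
    fix i
    assume "i < dim_vec (0\<^sub>v n :: 'a vec)"
    then have i: "i < n" by simp
    have "(mat_of_cols n [u] *\<^sub>v v) $ i = u $ i * v $ 0"
      using i u v(1) by (simp add: mult_mat_vec_def scalar_prod_def row_def mat_of_cols_def)
    then show "u $ i = 0\<^sub>v n $ i"
      using v(3) v0 i by (simp add: vec_eq_iff)
  qed (use u in auto)
  then show False
    using u by simp
qed

lemma lin_dep_pair_imp_multiple:
  assumes uw: "u \<in> carrier_vec n" "w \<in> carrier_vec n" "u \<noteq> w"
    and u: "u \<noteq> 0\<^sub>v n" and dep: "lin_dep {u, w}"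
  shows "\<exists>c. w = c \<cdot>\<^sub>v u"
proof -
  let ?B = "mat_of_cols n [u, w]"
  have "cols ?B = [u, w]"
    using uw by simp
  moreover have "?B \<in> carrier_mat n 2"
    using mat_of_cols_carrier(1)[of n "[u, w]"] by (simp add: numeral_2_eq_2)
  ultimately obtain v where v: "v \<in> carrier_vec 2" "v \<noteq> 0\<^sub>v 2" "?B *\<^sub>v v = 0\<^sub>v n"
    using lin_depE[of ?B 2] dep uw(3) by auto
  have comb: "u $ i * v $ 0 + w $ i * v $ 1 = 0" if i: "i < n" for i
  proof -
    have "(?B *\<^sub>v v) $ i = u $ i * v $ 0 + w $ i * v $ 1"
      using i uw v(1) by (simp add: mult_mat_vec_def scalar_prod_def row_def mat_of_cols_def eval_nat_numeral)
    then show ?thesis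
      using v(3) i by simp
  qed
  have v1: "v $ 1 \<noteq> 0"
  proof
    assume v1: "v $ 1 = 0"
    then have "v $ 0 \<noteq> 0"
      using v(1,2) by (auto simp: vec_eq_iff less_2_cases_iff)
    then have "u = 0\<^sub>v n"
      using comb v1 uw(1) by (intro eq_vecI) auto
    then show False
      using u by simp
  qed
  have "w = (- v $ 0 / v $ 1) \<cdot>\<^sub>v u"
  proof (rule eq_vecI)
    fix i
    assume "i < dim_vec ((- v $ 0 / v $ 1) \<cdot>\<^sub>v u)"
    then have i: "i < n"
      using uw(1) by simp
    from comb[OF i] v1 show "w $ i = ((- v $ 0 / v $ 1) \<cdot>\<^sub>v u) $ i"
      using i uw by (simp add: field_simps add_eq_0_iff)
  qed (use uw in simp)
  then show ?thesis by blast
qed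

lemma rank_pos_if_nonzero_col:
  assumes A: "A \<in> carrier_mat n nc" and j: "j < nc" and "col A j \<noteq> 0\<^sub>v n"
  shows "rank A \<ge> 1"
proof -
  have "col A j \<in> set (cols A)" "col A j \<in> carrier_vec n"
    using A j by (auto simp: cols_def)
  then have "card {col A j} \<le> rank A"
    using rank_ge_card_indpt[OF A] lin_indpt_singleton assms(3) by blast
  then show ?thesis by simp
qed

lemma rank_le_1_col_multiple:
  assumes A: "A \<in> carrier_mat n nc" and "rank A \<le> 1"
    and j: "j < nc" and k: "k < nc" and "col A j \<noteq> 0\<^sub>v n"
  shows "\<exists>c. col A k = c \<cdot>\<^sub>v col A j"
proof (cases "col A j = col A k")
  case True
  then show ?thesis
    by (intro exI[of _ 1]) simp
next
  case False
  have "lin_dep {col A j, col A k}"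
  proof (rule ccontr)
    assume "lin_indpt {col A j, col A k}"
    moreover have "{col A j, col A k} \<subseteq> set (cols A)"
      using A j k by (auto simp: cols_def)
    ultimately have "card {col A j, col A k} \<le> rank A"
      using rank_ge_card_indpt[OF A] by blast
    then show False
      using False \<open>rank A \<le> 1\<close> by simp
  qed
  then show ?thesis
    using lin_dep_pair_imp_multiple A j k False assms(5) by auto
qed

end

definition outer_prod :: "real vec \<Rightarrow> real mat" where
  "outer_prod w = mat (dim_vec w) (dim_vec w) (\<lambda>(i, j). w $ i * w $ j)"

lemma outer_prod_carrier: "outer_prod w \<in> carrier_mat (dim_vec w) (dim_vec w)"
  by (simp add: outer_prod_def)

lemma outer_prod_mult_vec:
  assumes x: "x \<in> carrier_vec (dim_vec w)"
  shows "outer_prod w *\<^sub>v x = (w \<bullet> x) \<cdot>\<^sub>v w"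
proof (rule eq_vecI)
  fix i
  assume "i < dim_vec ((w \<bullet> x) \<cdot>\<^sub>v w)"
  then have i: "i < dim_vec w" by simp
  have "(outer_prod w *\<^sub>v x) $ i = (\<Sum>j = 0..<dim_vec w. w $ i * w $ j * x $ j)"
    using i x by (simp add: outer_prod_def mult_mat_vec_def scalar_prod_def row_def)
  also have "\<dots> = w $ i * (\<Sum>j = 0..<dim_vec w. w $ j * x $ j)"
    by (simp add: sum_distrib_left mult.assoc)
  also have "\<dots> = ((w \<bullet> x) \<cdot>\<^sub>v w) $ i"
    using i x by (simp add: scalar_prod_def)
  finally show "(outer_prod w *\<^sub>v x) $ i = ((w \<bullet> x) \<cdot>\<^sub>v w) $ i" .
qed (simp add: outer_prod_def)

lemma psd_outer_prod: "psd (outer_prod w)"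
  unfolding psd_def sym_mat_def
proof (intro conjI ballI)
  show "square_mat (outer_prod w)"
    by (simp add: outer_prod_def)
  show "transpose_mat (outer_prod w) = outer_prod w"
  proof (rule eq_matI)
    fix i j
    assume "i < dim_row (outer_prod w)" "j < dim_col (outer_prod w)"
    then show "transpose_mat (outer_prod w) $$ (i, j) = outer_prod w $$ (i, j)"
      by (simp add: outer_prod_def)
  qed (simp_all add: outer_prod_def)
  fix x :: "real vec"
  assume "x \<in> carrier_vec (dim_row (outer_prod w))"
  then have x: "x \<in> carrier_vec (dim_vec w)"
    by (simp add: outer_prod_def)
  have w: "w \<in> carrier_vec (dim_vec w)"
    by (rule carrier_vecI) simp
  have "x \<bullet> (outer_prod w *\<^sub>v x) = (w \<bullet> x) * (x \<bullet> w)"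
    unfolding outer_prod_mult_vec[OF x] by (rule scalar_prod_smult_right) (use x in auto)
  also have "\<dots> = (w \<bullet> x)\<^sup>2"
    using comm_scalar_prod[OF x w] by (simp add: power2_eq_square)
  finally show "0 \<le> x \<bullet> (outer_prod w *\<^sub>v x)" by simp
qed

lemma rank_outer_prod:
  assumes "w \<noteq> 0\<^sub>v (dim_vec w)"
  shows "mat_rank (outer_prod w) = 1"
proof -
  interpret vec_space "TYPE(real)" "dim_vec w" .
  obtain p where p: "p < dim_vec w" "w $ p \<noteq> 0"
    using assms by (auto simp: vec_eq_iff)
  have "rank (outer_prod w) \<le> 1"
    by (rule rank_le_1_product_entries[OF outer_prod_carrier, of "\<lambda>i. w $ i" "\<lambda>i. w $ i"])
      (simp add: outer_prod_def)
  moreover have "col (outer_prod w) p \<noteq> 0\<^sub>v (dim_vec w)"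
    using p by (auto simp: vec_eq_iff outer_prod_def)
  then have "rank (outer_prod w) \<ge> 1"
    using rank_pos_if_nonzero_col[OF outer_prod_carrier p(1)] by simp
  ultimately show ?thesis
    by (simp add: mat_rank_def outer_prod_def)
qed

lemma sym_rank_le_1_entries:
  fixes Z :: "real mat"
  assumes Z: "Z \<in> carrier_mat D D" "transpose_mat Z = Z" "vec_space.rank D Z \<le> 1"
    and k: "k < D" "col Z k \<noteq> 0\<^sub>v D"
  shows "Z $$ (k, k) \<noteq> 0"
    and "\<And>a b. a < D \<Longrightarrow> b < D \<Longrightarrow> Z $$ (a, b) = Z $$ (a, k) * Z $$ (b, k) / Z $$ (k, k)"
proof -
  have sym: "Z $$ (a, b) = Z $$ (b, a)" if "a < D" "b < D" for a b
  proof -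
    have "transpose_mat Z $$ (a, b) = Z $$ (a, b)"
      using Z(2) by simp
    then show ?thesis
      using that Z(1) by simp
  qed
  have "\<forall>l. \<exists>c. l < D \<longrightarrow> col Z l = c \<cdot>\<^sub>v col Z k"
    using vec_space.rank_le_1_col_multiple[OF Z(1,3) k(1) _ k(2)] by blast
  from choice[OF this] obtain c where c: "\<forall>l. l < D \<longrightarrow> col Z l = c l \<cdot>\<^sub>v col Z k" ..
  have entry: "Z $$ (a, l) = c l * Z $$ (a, k)" if "a < D" "l < D" for a l
  proof -
    have "col Z l $ a = (c l \<cdot>\<^sub>v col Z k) $ a"
      using c that(2) by simp
    then show ?thesis
      using that Z(1) k(1) by simp
  qed
  obtain i where i: "i < D" "Z $$ (i, k) \<noteq> 0"
    using k Z(1) by (auto simp: vec_eq_iff)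
  show kk: "Z $$ (k, k) \<noteq> 0"
    using entry[OF k(1) i(1)] sym[OF i(1) k(1)] i(2) by auto
  fix a b
  assume ab: "a < D" "b < D"
  have "c b = Z $$ (b, k) / Z $$ (k, k)"
    using entry[OF k(1) ab(2)] sym[OF k(1) ab(2)] kk by (simp add: field_simps)
  then show "Z $$ (a, b) = Z $$ (a, k) * Z $$ (b, k) / Z $$ (k, k)"
    using entry[OF ab] by simp
qed

lemma psd_rank_1_imp_outer_prod:
  assumes Z: "Z \<in> carrier_mat D D" "psd Z" "mat_rank Z = 1"
  shows "\<exists>v \<in> carrier_vec D. Z = outer_prod v"
proof -
  interpret vec_space "TYPE(real)" D .
  have rank: "rank Z = 1"
    using Z by (simp add: mat_rank_def)
  then have "Z \<noteq> 0\<^sub>m D D"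
    using rank_0I by auto
  then obtain k where k: "k < D" "col Z k \<noteq> 0\<^sub>v D"
    using Z(1) by (auto simp: mat_eq_iff vec_eq_iff)
  have sym: "transpose_mat Z = Z"
    using Z(2) by (simp add: psd_def sym_mat_def)
  define d where "d = Z $$ (k, k)"
  have "d \<ge> 0"
    using psd_diag_nonneg[OF Z(2)] k Z(1) by (simp add: d_def)
  with sym_rank_le_1_entries(1)[OF Z(1) sym _ k] rank have d: "d > 0"
    by (simp add: d_def)
  define v where "v = vec D (\<lambda>a. Z $$ (a, k) / sqrt d)"
  have "Z = outer_prod v"
  proof (rule eq_matI)
    fix a b
    assume "a < dim_row (outer_prod v)" "b < dim_col (outer_prod v)"
    then have ab: "a < D" "b < D"
      by (auto simp: outer_prod_def v_def)
    have "Z $$ (a, b) = Z $$ (a, k) * Z $$ (b, k) / d"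
      using sym_rank_le_1_entries(2)[OF Z(1) sym _ k ab] rank by (simp add: d_def)
    also have "\<dots> = (Z $$ (a, k) / sqrt d) * (Z $$ (b, k) / sqrt d)"
      using d by (simp add: field_simps)
    finally show "Z $$ (a, b) = outer_prod v $$ (a, b)"
      using ab by (simp add: outer_prod_def v_def)
  qed (use Z(1) in \<open>auto simp: outer_prod_def v_def\<close>)
  then show ?thesis
    by (auto simp: v_def)
qed

lemma mult_add_less_mult:
  fixes a r i c :: nat
  assumes "a < r" "i < c"
  shows "r * i + a < r * c"
proof -
  have "r * i + a < r * (i + 1)"
    using assms(1) by simp
  also have "\<dots> \<le> r * c"
    using assms(2) by (intro mult_le_mono2) simp
  finally show ?thesis .
qed

lemma mod_less_of_less_mult: "(k :: nat) < a * b \<Longrightarrow> k mod a < a"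
  by (metis mod_less_divisor mult_is_0 not_gr0 not_less0)

lemma div_less_of_less_mult: "(k :: nat) < a * b \<Longrightarrow> k div a < b"
  by (simp add: less_mult_imp_div_less mult.commute)

lemma dim_vecm [simp]: "dim_vec (vecm X) = dim_row X * dim_col X"
  by (simp add: vecm_def)

lemma vecm_index_mult_add:
  assumes "X \<in> carrier_mat r c" "a < r" "i < c"
  shows "vecm X $ (r * i + a) = X $$ (a, i)"
  using assms mult_add_less_mult[OF assms(2,3)] by (simp add: vecm_def)

lemma vecm_surj:
  assumes w: "w \<in> carrier_vec (r * c)"
  shows "\<exists>X \<in> carrier_mat r c. vecm X = w"
proof
  define X where "X = mat r c (\<lambda>(a, i). w $ (r * i + a))"
  show "X \<in> carrier_mat r c"
    by (simp add: X_def)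
  show "vecm X = w"
  proof (rule eq_vecI)
    fix k
    assume "k < dim_vec w"
    then have k: "k < r * c"
      using w by simp
    then show "vecm X $ k = w $ k"
      using mod_less_of_less_mult[OF k] div_less_of_less_mult[OF k]
      by (simp add: vecm_def X_def)
  qed (use w in \<open>simp add: X_def\<close>)
qed

definition stacked_block :: "nat \<Rightarrow> real mat \<Rightarrow> real mat \<Rightarrow> nat \<Rightarrow> real vec" where
  "stacked_block n H L p = (if p < n then col H p else col L (p - n))"

lemma zoff_add_less:
  assumes "p < n + n" "a < zsz n m p"
  shows "zoff n m p + a < n * (n + m)"
proof (cases "p < n")
  case True
  then have "n * p + a < n * n"
    using assms by (intro mult_add_less_mult) (simp_all add: zsz_def)
  then show ?thesis
    using True by (simp add: zoff_def algebra_simps)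
next
  case False
  then have "m * (p - n) + a < m * n"
    using assms by (intro mult_add_less_mult) (simp_all add: zsz_def)
  then show ?thesis
    using False by (simp add: zoff_def distrib_left mult.commute)
qed

lemma stacked_vec_index:
  assumes H: "H \<in> carrier_mat n n" and L: "L \<in> carrier_mat m n"
    and p: "p < n + n" and a: "a < zsz n m p"
  shows "(vecm H @\<^sub>v vecm L) $ (zoff n m p + a) = stacked_block n H L p $ a"
proof (cases "p < n")
  case True
  then have "n * p + a < n * n"
    using a by (intro mult_add_less_mult) (simp_all add: zsz_def)
  then show ?thesis
    using True H L a vecm_index_mult_add[OF H, of a p]
    by (simp add: zoff_def zsz_def stacked_block_def)
next
  case False
  then have "m * (p - n) + a < m * n"
    using p a by (intro mult_add_less_mult) (simp_all add: zsz_def)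
  then show ?thesis
    using False H L p a vecm_index_mult_add[OF L, of a "p - n"]
    by (simp add: zoff_def zsz_def stacked_block_def)
qed

lemma Zof_eq_outer_prod: "Zof H L = outer_prod (vecm H @\<^sub>v vecm L)"
  by (simp add: Zof_def outer_prod_def Let_def)

lemma Zof_carrier:
  "H \<in> carrier_mat n n \<Longrightarrow> L \<in> carrier_mat m n \<Longrightarrow> Zof H L \<in> carrier_mat (n * (n + m)) (n * (n + m))"
  by (simp add: Zof_eq_outer_prod outer_prod_def algebra_simps)

lemma vecm_Zblk_Zof:
  assumes H: "H \<in> carrier_mat n n" and L: "L \<in> carrier_mat m n"
    and p: "p < n + n" and q: "q < n + n" and r: "r < zsz n m p * zsz n m q"
  shows "vecm (Zblk n m (Zof H L) p q) $ r
    = stacked_block n H L p $ (r mod zsz n m p) * stacked_block n H L q $ (r div zsz n m p)"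
proof -
  let ?a = "r mod zsz n m p" and ?b = "r div zsz n m p"
  have ab: "?a < zsz n m p" "?b < zsz n m q"
    using mod_less_of_less_mult[OF r] div_less_of_less_mult[OF r] .
  have "vecm (Zblk n m (Zof H L) p q) $ r = Zof H L $$ (zoff n m p + ?a, zoff n m q + ?b)"
    using r ab by (simp add: vecm_def Zblk_def)
  also have "\<dots> = stacked_block n H L p $ ?a * stacked_block n H L q $ ?b"
    using zoff_add_less[OF p ab(1)] zoff_add_less[OF q ab(2)] H L
      stacked_vec_index[OF H L p ab(1)] stacked_vec_index[OF H L q ab(2)]
    by (simp add: Zof_eq_outer_prod outer_prod_def algebra_simps)
  finally show ?thesis .
qed

context
  fixes n m :: nat and H L :: "real mat"
  assumes H: "H \<in> carrier_mat n n" and L: "L \<in> carrier_mat m n"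
begin

lemma Fhh_Zof: "Fhh n m (Zof H L) = kron H H"
proof (rule eq_matI)
  fix r c
  assume "r < dim_row (kron H H)" "c < dim_col (kron H H)"
  then have r: "r < n * n" and c: "c < n * n"
    using H by (simp_all add: kron_def)
  note bounds = mod_less_of_less_mult[OF r] div_less_of_less_mult[OF r]
    mod_less_of_less_mult[OF c] div_less_of_less_mult[OF c]
  have "n > 0"
    using c by (cases n) simp_all
  show "Fhh n m (Zof H L) $$ (r, c) = kron H H $$ (r, c)"
    using H L r c bounds \<open>n > 0\<close>
    by (simp add: Fhh_def kron_def vecm_Zblk_Zof zsz_def stacked_block_def trans_less_add1)
qed (use H in \<open>simp_all add: Fhh_def kron_def\<close>)

lemma Fhl_Zof: "Fhl n m (Zof H L) = kron H L"
proof (rule eq_matI)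
  fix r c
  assume "r < dim_row (kron H L)" "c < dim_col (kron H L)"
  then have r: "r < m * n" and c: "c < n * n"
    using H L by (simp_all add: kron_def mult.commute)
  note bounds = mod_less_of_less_mult[OF r] div_less_of_less_mult[OF r]
    mod_less_of_less_mult[OF c] div_less_of_less_mult[OF c]
  show "Fhl n m (Zof H L) $$ (r, c) = kron H L $$ (r, c)"
    using H L r c bounds
    by (simp add: Fhl_def kron_def vecm_Zblk_Zof zsz_def stacked_block_def mult.commute)
qed (use H L in \<open>simp_all add: Fhl_def kron_def mult.commute\<close>)

lemma Flh_Zof: "Flh n m (Zof H L) = kron L H"
proof (rule eq_matI)
  fix r c
  assume "r < dim_row (kron L H)" "c < dim_col (kron L H)"
  then have r: "r < n * m" and c: "c < n * n"
    using H L by (simp_all add: kron_def mult.commute)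
  note bounds = mod_less_of_less_mult[OF r] div_less_of_less_mult[OF r]
    mod_less_of_less_mult[OF c] div_less_of_less_mult[OF c]
  have "n > 0"
    using c by (cases n) simp_all
  show "Flh n m (Zof H L) $$ (r, c) = kron L H $$ (r, c)"
    using H L r c bounds \<open>n > 0\<close>
    by (simp add: Flh_def kron_def vecm_Zblk_Zof zsz_def stacked_block_def trans_less_add1 mult.commute)
qed (use H L in \<open>simp_all add: Flh_def kron_def mult.commute\<close>)

lemma Fll_Zof: "Fll n m (Zof H L) = kron L L"
proof (rule eq_matI)
  fix r c
  assume "r < dim_row (kron L L)" "c < dim_col (kron L L)"
  then have r: "r < m * m" and c: "c < n * n"
    using L by (simp_all add: kron_def)
  note bounds = mod_less_of_less_mult[OF r] div_less_of_less_mult[OF r]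
    mod_less_of_less_mult[OF c] div_less_of_less_mult[OF c]
  show "Fll n m (Zof H L) $$ (r, c) = kron L L $$ (r, c)"
    using H L r c bounds
    by (simp add: Fll_def kron_def vecm_Zblk_Zof zsz_def stacked_block_def mult.commute)
qed (use L in \<open>simp_all add: Fll_def kron_def\<close>)

lemma S_lmi_Zof: "S_lmi n m M Q (Zof H L) b = S_qmi n m M Q H L b"
  unfolding S_lmi_def S_qmi_def F_lmi_def F_qmi_def Fhh_Zof Fhl_Zof Flh_Zof Fll_Zof ..

lemma rank_Zof:
  assumes "H \<noteq> 0\<^sub>m n n"
  shows "mat_rank (Zof H L) = 1"
proof -
  obtain a i where ai: "a < n" "i < n" "H $$ (a, i) \<noteq> 0"
    using assms H by (auto simp: mat_eq_iff)
  have "(vecm H @\<^sub>v vecm L) $ (n * i + a) = H $$ (a, i)"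
    using mult_add_less_mult[OF ai(1,2)] vecm_index_mult_add[OF H ai(1,2)] H L by simp
  moreover have "n * i + a < dim_vec (vecm H @\<^sub>v vecm L)"
    using mult_add_less_mult[OF ai(1,2)] H by simp
  ultimately have "vecm H @\<^sub>v vecm L \<noteq> 0\<^sub>v (dim_vec (vecm H @\<^sub>v vecm L))"
    using ai(3) by (metis index_zero_vec(1))
  then show ?thesis
    by (simp add: Zof_eq_outer_prod rank_outer_prod)
qed

end

lemma psd_rank_1_imp_Zof:
  assumes "Z \<in> carrier_mat (n * (n + m)) (n * (n + m))" "psd Z" "mat_rank Z = 1"
  shows "\<exists>H \<in> carrier_mat n n. \<exists>L \<in> carrier_mat m n. Z = Zof H L"
proof -
  obtain v where v: "v \<in> carrier_vec (n * n + m * n)" "Z = outer_prod v"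
    using psd_rank_1_imp_outer_prod[OF assms] by (auto simp: algebra_simps)
  obtain H where H: "H \<in> carrier_mat n n" "vecm H = vec_first v (n * n)"
    using vecm_surj[of "vec_first v (n * n)" n n] by auto
  obtain L where L: "L \<in> carrier_mat m n" "vecm L = vec_last v (m * n)"
    using vecm_surj[of "vec_last v (m * n)" m n] by auto
  have "Z = Zof H L"
    using v H(2) L(2) by (simp add: Zof_eq_outer_prod)
  with H(1) L(1) show ?thesis by blast
qed

lemma S_qmi_psd_imp_nonzero:
  assumes Q: "Q \<in> carrier_mat (tri n) (tri n)" "pd Q" and n: "n > 0"
    and H: "H \<in> carrier_mat n n" and S: "psd (S_qmi n m M Q H L b)"
  shows "H \<noteq> 0\<^sub>m n n"
proof
  assume "H = 0\<^sub>m n n"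
  then have "kron H H = 0\<^sub>m (n * n) (n * n)"
    by (intro eq_matI) (auto simp: kron_def mod_less_of_less_mult div_less_of_less_mult)
  then have C0: "Cop n (kron H H) = 0\<^sub>m (tri n) (tri n)"
    unfolding Cop_def by (simp add: Ee_def Dup_def)
  let ?S = "S_qmi n m M Q H L b"
  have "2 \<le> n * (n + 1)"
    using n mult_le_mono[of 1 n 2 "n + 1"] by simp
  then have t: "tri n > 0"
    by (simp add: tri_def)
  have "?S $$ (tri n, tri n) = - Q $$ (0, 0)"
    using Q t by (simp add: S_qmi_def C0)
  moreover have "dim_row ?S = tri n + tri n"
    using Q by (simp add: S_qmi_def)
  then have "?S $$ (tri n, tri n) \<ge> 0"
    using psd_diag_nonneg[OF S] t by simp
  moreover have "Q $$ (0, 0) > 0"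
    using pd_diag_pos[OF Q(2)] Q t by simp
  ultimately show False by simp
qed

lemma psd_Zof: "psd (Zof H L)"
  by (simp add: Zof_eq_outer_prod psd_outer_prod)

lemma rank_Zof_if_S_qmi_psd:
  assumes "H \<in> carrier_mat n n" "L \<in> carrier_mat m n" "n > 0"
    and "Q \<in> carrier_mat (tri n) (tri n)" "pd Q" "psd (S_qmi n m M Q H L b)"
  shows "mat_rank (Zof H L) = 1"
  using assms rank_Zof S_qmi_psd_imp_nonzero by blast

theorem theorem8:
  fixes n m N :: nat and M :: "nat \<Rightarrow> real mat" and \<beta> :: real
  assumes "n > 0" and "m > 0" and "N > 0"
    and "\<And>k. k < N \<Longrightarrow> M k \<in> carrier_mat (n * (n + m)) (n * (n + m)) \<and> sym_mat (M k)"
    and "0 < \<beta>" and "\<beta> < 1"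
  defines "C31 \<equiv> \<lambda>Q Z. (\<forall>k<N. Q k \<in> carrier_mat (tri n) (tri n) \<and> pd (Q k))
              \<and> Z \<in> carrier_mat (n * (n + m)) (n * (n + m)) \<and> psd Z \<and> mat_rank Z = 1
              \<and> (\<forall>k<N. psd (S_lmi n m (M k) (Q k) Z \<beta>))"
    and "C32 \<equiv> \<lambda>Q Z. (\<forall>k<N. Q k \<in> carrier_mat (tri n) (tri n) \<and> pd (Q k))
              \<and> Z \<in> carrier_mat (n * (n + m)) (n * (n + m)) \<and> psd Z \<and> mat_rank Z = 1
              \<and> (\<forall>k<N. pd (S_lmi n m (M k) (Q k) Z 1))"
    and "C21 \<equiv> \<lambda>Q H L. (\<forall>k<N. Q k \<in> carrier_mat (tri n) (tri n) \<and> pd (Q k))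
              \<and> H \<in> carrier_mat n n \<and> L \<in> carrier_mat m n
              \<and> (\<forall>k<N. psd (S_qmi n m (M k) (Q k) H L \<beta>))"
    and "C22 \<equiv> \<lambda>Q H L. (\<forall>k<N. Q k \<in> carrier_mat (tri n) (tri n) \<and> pd (Q k))
              \<and> H \<in> carrier_mat n n \<and> L \<in> carrier_mat m n
              \<and> (\<forall>k<N. pd (S_qmi n m (M k) (Q k) H L 1))"
  shows "((\<exists>Q Z. C31 Q Z) \<longleftrightarrow> (\<exists>Q H L. C21 Q H L))
       \<and> ((\<exists>Q Z. C32 Q Z) \<longleftrightarrow> (\<exists>Q H L. C22 Q H L))
       \<and> (\<forall>Q H L. C21 Q H L \<longrightarrow> C31 Q (Zof H L))
       \<and> (\<forall>Q Z. C31 Q Z \<longrightarrow> (\<exists>H L. Z = Zof H L \<and> C21 Q H L))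
       \<and> (\<forall>Q H L. C22 Q H L \<longrightarrow> C32 Q (Zof H L))
       \<and> (\<forall>Q Z. C32 Q Z \<longrightarrow> (\<exists>H L. Z = Zof H L \<and> C22 Q H L))"
proof -
  note defs = assms(7-10)
  have "C31 Q (Zof H L)" if "C21 Q H L" for Q H L
    using that \<open>N > 0\<close> \<open>n > 0\<close> rank_Zof_if_S_qmi_psd[of H n L m "Q 0" "M 0" \<beta>]
    by (auto simp: defs S_lmi_Zof Zof_carrier psd_Zof)
  moreover have "C32 Q (Zof H L)" if "C22 Q H L" for Q H L
    using that \<open>N > 0\<close> \<open>n > 0\<close> rank_Zof_if_S_qmi_psd[of H n L m "Q 0" "M 0" 1] pd_imp_psd
    by (auto simp: defs S_lmi_Zof Zof_carrier psd_Zof)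
  moreover have "\<exists>H L. Z = Zof H L \<and> C21 Q H L" if "C31 Q Z" for Q Z
  proof -
    obtain H L where "H \<in> carrier_mat n n" "L \<in> carrier_mat m n" "Z = Zof H L"
      using \<open>C31 Q Z\<close> psd_rank_1_imp_Zof[of Z n m] by (auto simp: defs)
    with \<open>C31 Q Z\<close> show ?thesis
      by (intro exI[of _ H] exI[of _ L]) (auto simp: defs S_lmi_Zof)
  qed
  moreover have "\<exists>H L. Z = Zof H L \<and> C22 Q H L" if "C32 Q Z" for Q Z
  proof -
    obtain H L where "H \<in> carrier_mat n n" "L \<in> carrier_mat m n" "Z = Zof H L"
      using \<open>C32 Q Z\<close> psd_rank_1_imp_Zof[of Z n m] by (auto simp: defs)
    with \<open>C32 Q Z\<close> show ?thesis
      by (intro exI[of _ H] exI[of _ L]) (auto simp: defs S_lmi_Zof)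
  qed
  ultimately show ?thesis
    by blast
qed

end
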